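(* Let $\varphi\neq0$ and $\phi$ be real numbers with $\sin^2\phi\neq1$, and $$M_A=\begin{pmatrix} i\cosh\varphi & e^{i\phi}\sinh\varphi\\ e^{-i\phi}\sinh\varphi & -i\cosh\varphi\end{pmatrix},\qquad M_B=\begin{pmatrix} i&0\\0&-i\end{pmatrix}.$$ Let $M_1,M_2,\dots$ be independent random matrices, each equal to $M_A$ or $M_B$ with probability $1/2$, and write $\Pi_n=M_1\cdots M_n=\begin{pmatrix}\alpha_n&\beta_n\\ \beta_n^*&\alpha_n^*\end{pmatrix}$. Then there is a constant $g>0$ (depending on $\varphi,\phi$) such that $$\mathbb{E}\left(\log|\alpha_n-\beta_n|\right)\sim g\sqrt{n}\qquad\text{as } n\to\infty .$$
   Context: $\mathbb{E}$ denotes expectation over the random choices of $M_1,\dots,M_n$. (Physically, $\frac{c}{3}\mathbb{E}(\log|\alpha_n-\beta_n|)$ is the averaged entanglement entropy growth of half of a randomly driven CFT of central charge $c$ at a type I exceptional point.) *)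

theory Defs
  imports "HOL-Analysis.Analysis" "HOL-Library.Landau_Symbols"
begin

definition mat2 :: "complex \<Rightarrow> complex \<Rightarrow> complex \<Rightarrow> complex \<Rightarrow> complex^2^2" where
  "mat2 a b c d = (\<chi> i j. if i = 1 then (if j = 1 then a else b) else (if j = 1 then c else d))"

definition MA :: "real \<Rightarrow> real \<Rightarrow> complex^2^2" where
  "MA vphi phi = mat2 (\<i> * cosh vphi) (cis phi * sinh vphi) (cis (- phi) * sinh vphi) (- \<i> * cosh vphi)"

definition MB :: "complex^2^2" where
  "MB = mat2 \<i> 0 0 (- \<i>)"

definition prodM :: "real \<Rightarrow> real \<Rightarrow> bool list \<Rightarrow> complex^2^2" where
  "prodM vphi phi xs = foldr (\<lambda>b P. (if b then MA vphi phi else MB) ** P) xs (mat 1)"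

definition ElogAB :: "real \<Rightarrow> real \<Rightarrow> nat \<Rightarrow> real" where
  "ElogAB vphi phi n =
     (\<Sum>xs\<in>{xs :: bool list. length xs = n}.
        ln (cmod (prodM vphi phi xs $ 1 $ 1 - prodM vphi phi xs $ 1 $ 2))) / 2 ^ n"

end

theory Submission
  imports Defs "HOL-Real_Asymp.Real_Asymp"
begin

(* Let B(t) be the hyperbolic rotation boost phi t. Then M_A^2 = -1, M_A B(t) = B(-t) M_A and
   M_B = M_A B(vphi), so every product M_1...M_n equals +-W(k) with W(k) = B(floor(k/2) vphi) M_A^(k mod 2),
   where the index k moves by k -> 1 - k under M_A and by k -> -1 - k under M_B. Up to sign changes this
   is a simple random walk, so |k| has the law of |S_n|.
   The entry difference alpha - beta of W(k) is P e^s + R e^-s with |s| = |vphi| |k| / 2 + O(1), and P, R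
   are nonzero precisely because sin^2 phi ~= 1; hence log |alpha_n - beta_n| = |vphi| |k| / 2 + O(1).
   Finally E|S_n| = n binom(2m, m) / 4^m with m = floor(n/2), which by Wallis' product is ~ sqrt(2n/pi);
   so g = |vphi| / sqrt(2 pi). *)

section \<open>Products of the driving matrices\<close>

lemma mat2_nth [simp]:
  "mat2 a b c d $ 1 $ 1 = a" "mat2 a b c d $ 1 $ 2 = b"
  "mat2 a b c d $ 2 $ 1 = c" "mat2 a b c d $ 2 $ 2 = d"
  by (simp_all add: mat2_def)

lemma mat2_mult:
  "mat2 a b c d ** mat2 a' b' c' d' = mat2 (a*a' + b*c') (a*b' + b*d') (c*a' + d*c') (c*b' + d*d')"
  by (simp add: mat2_def matrix_matrix_mult_def vec_eq_iff forall_2 sum_2)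

lemma mat2_eq_iff:
  "mat2 a b c d = mat2 a' b' c' d' \<longleftrightarrow> a = a' \<and> b = b' \<and> c = c' \<and> d = d'"
  by (auto simp: mat2_def vec_eq_iff forall_2)

lemma mat1_eq_mat2: "mat 1 = mat2 1 0 0 1"
  by (simp add: mat2_def mat_def vec_eq_iff forall_2)

lemma uminus_mat2: "- mat2 a b c d = mat2 (-a) (-b) (-c) (-d)"
  by (simp add: mat2_def vec_eq_iff forall_2)

lemma matrix_mul_minus_right: "(A :: 'a::ring_1 ^ 'n ^ 'm) ** - B = - (A ** B)"
  by (simp add: matrix_matrix_mult_def vec_eq_iff sum_negf)

definition boost :: "real \<Rightarrow> real \<Rightarrow> complex^2^2" where
  "boost phi t = mat2 (of_real (cosh t)) (\<i> * cis phi * of_real (sinh t))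
     (- \<i> * cis (- phi) * of_real (sinh t)) (of_real (cosh t))"

lemma of_real_cosh_square: "complex_of_real (cosh t) * cosh t = 1 + complex_of_real (sinh t) * sinh t"
proof -
  have "cosh t * cosh t = 1 + sinh t * sinh t"
    using cosh_square_eq[of t] by (simp add: power2_eq_square)
  then show ?thesis
    by (metis of_real_1 of_real_add of_real_mult)
qed

lemma cis_mult_cis_neg:
  "cis phi * cis (- phi) = 1" "cis (- phi) * cis phi = 1" "cis phi * (cis (- phi) * z) = z"
  by (simp_all add: cis_mult flip: mult.assoc)

lemma boost_add: "boost phi s ** boost phi t = boost phi (s + t)"
  unfolding boost_def mat2_mult mat2_eq_iff
  by (auto simp: algebra_simps cis_mult_cis_neg cosh_add sinh_add)

lemma MA_squared: "MA vphi phi ** MA vphi phi = - mat 1"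
  unfolding MA_def mat2_mult mat1_eq_mat2 uminus_mat2 mat2_eq_iff
  by (auto simp: algebra_simps of_real_cosh_square cis_mult_cis_neg)

lemma MB_eq_MA_boost: "MB = MA vphi phi ** boost phi vphi"
  unfolding MA_def MB_def boost_def mat2_mult mat2_eq_iff
  by (auto simp: algebra_simps of_real_cosh_square cis_mult_cis_neg)

lemma MA_boost: "MA vphi phi ** boost phi t = boost phi (- t) ** MA vphi phi"
  unfolding MA_def boost_def mat2_mult mat2_eq_iff
  by (auto simp: algebra_simps cis_mult_cis_neg)

fun walk :: "bool list \<Rightarrow> int" where
  "walk [] = 0"
| "walk (b # xs) = (if b then 1 else -1) - walk xs"

definition walk_mat :: "real \<Rightarrow> real \<Rightarrow> int \<Rightarrow> complex^2^2" where
  "walk_mat vphi phi k =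
     boost phi (of_int (k div 2) * vphi) ** (if even k then mat 1 else MA vphi phi)"

lemma boost_walk_mat: "boost phi vphi ** walk_mat vphi phi k = walk_mat vphi phi (k + 2)"
  by (simp add: walk_mat_def matrix_mul_assoc boost_add algebra_simps)

lemma MA_walk_mat:
  "MA vphi phi ** walk_mat vphi phi k = walk_mat vphi phi (1 - k)
   \<or> MA vphi phi ** walk_mat vphi phi k = - walk_mat vphi phi (1 - k)"
proof (cases "even k")
  case True
  then have "(1 - k) div 2 = - (k div 2)" "odd (1 - k)" by presburger+
  with True show ?thesis
    by (simp add: walk_mat_def MA_boost)
next
  case False
  then have "(1 - k) div 2 = - (k div 2)" "even (1 - k)" by presburger+
  have "MA vphi phi ** walk_mat vphi phi k
        = boost phi (- (of_int (k div 2) * vphi)) ** (MA vphi phi ** MA vphi phi)"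
    using False by (simp add: walk_mat_def matrix_mul_assoc MA_boost)
  also have "\<dots> = - walk_mat vphi phi (1 - k)"
    using \<open>(1 - k) div 2 = - (k div 2)\<close> \<open>even (1 - k)\<close>
    by (simp add: walk_mat_def MA_squared matrix_mul_minus_right)
  finally show ?thesis ..
qed

lemma MB_walk_mat:
  "MB ** walk_mat vphi phi k = walk_mat vphi phi (-1 - k)
   \<or> MB ** walk_mat vphi phi k = - walk_mat vphi phi (-1 - k)"
proof -
  have "MB ** walk_mat vphi phi k = MA vphi phi ** walk_mat vphi phi (k + 2)"
    by (simp add: MB_eq_MA_boost[of vphi phi] boost_walk_mat flip: matrix_mul_assoc)
  then show ?thesis
    using MA_walk_mat[of vphi phi "k + 2"] by (simp add: algebra_simps)
qed

lemma prodM_walk_mat: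
  "prodM vphi phi xs = walk_mat vphi phi (walk xs) \<or> prodM vphi phi xs = - walk_mat vphi phi (walk xs)"
proof (induction xs)
  case Nil
  show ?case by (simp add: prodM_def walk_mat_def boost_def flip: mat1_eq_mat2)
next
  case (Cons b xs)
  have "prodM vphi phi (b # xs) = (if b then MA vphi phi else MB) ** prodM vphi phi xs"
    by (simp add: prodM_def)
  with Cons.IH MA_walk_mat[of vphi phi "walk xs"] MB_walk_mat[of vphi phi "walk xs"]
  show ?case by (auto simp: matrix_mul_minus_right)
qed

section \<open>Growth of the entry difference\<close>

lemma cosh_minus_i_cis_sinh:
  "complex_of_real (cosh t) - \<i> * cis phi * of_real (sinh t)
   = (1 - \<i> * cis phi) / 2 * of_real (exp t) + (1 + \<i> * cis phi) / 2 * of_real (exp (- t))"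
  by (simp add: cosh_def sinh_def field_simps)

definition walk_exponent :: "real \<Rightarrow> int \<Rightarrow> real" where
  "walk_exponent vphi k = (if even k then 1 else -1) * (of_int ((k + 1) div 2) * vphi)"

(* For odd k the entry difference is i times the even-type combination taken at -t;
   hence the alternating sign in walk_exponent. *)

lemma norm_walk_mat_entry_diff:
  "cmod (walk_mat vphi phi k $ 1 $ 1 - walk_mat vphi phi k $ 1 $ 2)
   = cmod ((1 - \<i> * cis phi) / 2 * of_real (exp (walk_exponent vphi k))
           + (1 + \<i> * cis phi) / 2 * of_real (exp (- walk_exponent vphi k)))"
proof (cases "even k")
  case True
  then have "(k + 1) div 2 = k div 2" by presburger
  with True show ?thesis
    by (simp add: walk_exponent_def walk_mat_def boost_def cosh_minus_i_cis_sinh flip: mat1_eq_mat2)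
next
  case False
  define t where "t = of_int ((k + 1) div 2) * vphi"
  have "(k + 1) div 2 = k div 2 + 1"
    using False by presburger
  then have t: "t = of_int (k div 2) * vphi + vphi"
    by (simp add: t_def algebra_simps)
  have "walk_mat vphi phi k $ 1 $ 1 - walk_mat vphi phi k $ 1 $ 2
        = \<i> * of_real (cosh t) - cis phi * of_real (sinh t)"
    using False unfolding t
    by (simp add: walk_mat_def boost_def MA_def mat2_mult algebra_simps cis_mult_cis_neg
        cosh_add sinh_add)
  also have "\<dots> = \<i> * (of_real (cosh (- t)) - \<i> * cis phi * of_real (sinh (- t)))"
    by (simp add: algebra_simps)
  also have "\<dots> = \<i> * ((1 - \<i> * cis phi) / 2 * of_real (exp (- t))
        + (1 + \<i> * cis phi) / 2 * of_real (exp (- (- t))))"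
    by (simp only: cosh_minus_i_cis_sinh)
  finally show ?thesis
    using False by (simp add: walk_exponent_def t_def norm_mult)
qed

lemma norm_prodM_entry_diff:
  "cmod (prodM vphi phi xs $ 1 $ 1 - prodM vphi phi xs $ 1 $ 2)
   = cmod (walk_mat vphi phi (walk xs) $ 1 $ 1 - walk_mat vphi phi (walk xs) $ 1 $ 2)"
  using prodM_walk_mat[of vphi phi xs] by (auto simp: norm_minus_commute)

lemma tendsto_ln_norm_exp_comb:
  fixes P R :: complex
  assumes "P \<noteq> 0"
  shows "((\<lambda>t. ln (cmod (P * of_real (exp t) + R * of_real (exp (- t)))) - t)
           \<longlongrightarrow> ln (cmod P)) at_top"
proof -
  have decay: "((\<lambda>t::real. exp (- 2 * t)) \<longlongrightarrow> 0) at_top"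
    by real_asymp
  have lim: "((\<lambda>t. cmod (P + R * of_real (exp (- 2 * t)))) \<longlongrightarrow> cmod P) at_top"
    using tendsto_norm[OF tendsto_add[OF tendsto_const tendsto_mult[OF tendsto_const
          tendsto_of_real[OF decay, where 'a = complex]]], of P R]
    by simp
  have "\<forall>\<^sub>F t in at_top. 0 < cmod (P + R * of_real (exp (- 2 * t)))"
    using order_tendstoD(1)[OF lim, of 0] assms by simp
  then have eq: "\<forall>\<^sub>F t in at_top. ln (cmod (P + R * of_real (exp (- 2 * t))))
                                 = ln (cmod (P * of_real (exp t) + R * of_real (exp (- t)))) - t"
  proof eventually_elim
    case (elim t)
    have "P * of_real (exp t) + R * of_real (exp (- t)) = of_real (exp t) * (P + R * of_real (exp (- 2 * t)))"
      by (simp add: algebra_simps flip: exp_add of_real_mult)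
    with elim show ?case
      by (simp add: norm_mult ln_mult)
  qed
  have "((\<lambda>t. ln (cmod (P + R * of_real (exp (- 2 * t))))) \<longlongrightarrow> ln (cmod P)) at_top"
    using assms by (intro tendsto_ln lim) simp
  from this eq show ?thesis
    by (rule Lim_transform_eventually)
qed

lemma ln_norm_exp_comb_bounded:
  fixes P R :: complex
  assumes "P \<noteq> 0" "R \<noteq> 0"
  obtains K T where
    "\<And>t. T \<le> \<bar>t\<bar> \<Longrightarrow> \<bar>ln (cmod (P * of_real (exp t) + R * of_real (exp (- t)))) - \<bar>t\<bar>\<bar> \<le> K"
proof -
  have near: "\<exists>T. \<forall>t\<ge>T. \<bar>ln (cmod (A * of_real (exp t) + B * of_real (exp (- t)))) - t\<bar>
                            \<le> \<bar>ln (cmod A)\<bar> + 1"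
    if "A \<noteq> 0" for A B :: complex
  proof -
    have "\<forall>\<^sub>F t in at_top.
            dist (ln (cmod (A * of_real (exp t) + B * of_real (exp (- t)))) - t) (ln (cmod A)) < 1"
      using tendstoD[OF tendsto_ln_norm_exp_comb[OF that]] by simp
    then show ?thesis
      unfolding eventually_at_top_linorder dist_real_def by (auto elim!: ex_forward)
  qed
  obtain T1 where T1: "\<And>t. t \<ge> T1 \<Longrightarrow> \<bar>ln (cmod (P * of_real (exp t) + R * of_real (exp (- t)))) - t\<bar>
                                          \<le> \<bar>ln (cmod P)\<bar> + 1"
    using near[OF assms(1)] by blast
  obtain T2 where T2: "\<And>t. t \<ge> T2 \<Longrightarrow> \<bar>ln (cmod (R * of_real (exp t) + P * of_real (exp (- t)))) - t\<bar>
                                          \<le> \<bar>ln (cmod R)\<bar> + 1"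
    using near[OF assms(2)] by blast
  show ?thesis
  proof
    fix t :: real
    assume "max T1 T2 \<le> \<bar>t\<bar>"
    then consider "t \<ge> T1" "t \<ge> 0" | "- t \<ge> T2" "t < 0" by linarith
    then show "\<bar>ln (cmod (P * of_real (exp t) + R * of_real (exp (- t)))) - \<bar>t\<bar>\<bar>
               \<le> max (\<bar>ln (cmod P)\<bar> + 1) (\<bar>ln (cmod R)\<bar> + 1)"
    proof cases
      case 1
      then show ?thesis using T1[of t] by simp
    next
      case 2
      then show ?thesis using T2[of "- t"] by (simp add: add.commute)
    qed
  qed
qed

lemma bounded_if_eventually_bounded_cofinite:
  fixes f :: "'a \<Rightarrow> real"
  assumes "\<forall>\<^sub>F x in cofinite. \<bar>f x\<bar> \<le> K"
  obtains K' where "\<And>x. \<bar>f x\<bar> \<le> K'"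
proof
  let ?S = "{x. \<not> \<bar>f x\<bar> \<le> K}"
  have "finite ?S"
    using assms by (simp add: eventually_cofinite)
  then show "\<bar>f x\<bar> \<le> Max (insert K ((\<lambda>x. \<bar>f x\<bar>) ` ?S))" for x
    by (cases "x \<in> ?S") (auto intro: Max_ge order.trans[OF _ Max_ge])
qed

lemma two_abs_ceiling_half_approx: "\<bar>2 * \<bar>(k + 1) div 2\<bar> - \<bar>k\<bar>\<bar> \<le> (1::int)"
  by presburger

lemma abs_walk_exponent_approx:
  "\<bar>\<bar>walk_exponent vphi k\<bar> - \<bar>vphi\<bar> / 2 * \<bar>of_int k\<bar>\<bar> \<le> \<bar>vphi\<bar> / 2"
proof -
  have diff: "\<bar>walk_exponent vphi k\<bar> - \<bar>vphi\<bar> / 2 * \<bar>of_int k\<bar>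
              = \<bar>vphi\<bar> / 2 * of_int (2 * \<bar>(k + 1) div 2\<bar> - \<bar>k\<bar>)"
    by (simp add: walk_exponent_def abs_mult algebra_simps)
  have "\<bar>\<bar>walk_exponent vphi k\<bar> - \<bar>vphi\<bar> / 2 * \<bar>of_int k\<bar>\<bar>
        = \<bar>vphi\<bar> / 2 * of_int \<bar>2 * \<bar>(k + 1) div 2\<bar> - \<bar>k\<bar>\<bar>"
    unfolding diff abs_mult by simp
  also have "\<dots> \<le> \<bar>vphi\<bar> / 2 * 1"
    using two_abs_ceiling_half_approx[of k]
    by (intro mult_left_mono) (simp only: of_int_le_1_iff, simp)
  finally show ?thesis
    by simp
qed

lemma eventually_cofinite_abs_of_int_ge: "\<forall>\<^sub>F k in cofinite. M \<le> \<bar>real_of_int k\<bar>"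
  unfolding eventually_cofinite
proof (rule finite_subset)
  show "{k. \<not> M \<le> \<bar>real_of_int k\<bar>} \<subseteq> {- \<lceil>M\<rceil>..\<lceil>M\<rceil>}"
    by (auto simp: abs_less_iff) linarith+
qed simp

lemma ln_norm_walk_mat_entry_diff_bounded:
  assumes "vphi \<noteq> 0" and "(sin phi)\<^sup>2 \<noteq> 1"
  obtains K where "\<And>k. \<bar>ln (cmod (walk_mat vphi phi k $ 1 $ 1 - walk_mat vphi phi k $ 1 $ 2))
                          - \<bar>vphi\<bar> / 2 * \<bar>of_int k\<bar>\<bar> \<le> K"
proof -
  have "sin phi \<noteq> 1" "sin phi \<noteq> -1"
    using assms(2) by auto
  then have "(1 - \<i> * cis phi) / 2 \<noteq> 0" "(1 + \<i> * cis phi) / 2 \<noteq> 0"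
    by (auto simp: complex_eq_iff)
  then obtain T K where KT: "\<And>t. T \<le> \<bar>t\<bar> \<Longrightarrow>
      \<bar>ln (cmod ((1 - \<i> * cis phi) / 2 * of_real (exp t) + (1 + \<i> * cis phi) / 2 * of_real (exp (- t))))
        - \<bar>t\<bar>\<bar> \<le> K"
    using ln_norm_exp_comb_bounded by blast
  have "\<forall>\<^sub>F k in cofinite. T \<le> \<bar>walk_exponent vphi k\<bar>"
    using eventually_cofinite_abs_of_int_ge[of "2 * T / \<bar>vphi\<bar> + 1"]
  proof eventually_elim
    case (elim k)
    have "T + \<bar>vphi\<bar> / 2 = \<bar>vphi\<bar> / 2 * (2 * T / \<bar>vphi\<bar> + 1)"
      using assms(1) by (simp add: field_simps)
    also have "\<dots> \<le> \<bar>vphi\<bar> / 2 * \<bar>of_int k\<bar>"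
      using elim by (intro mult_left_mono) simp_all
    finally have "T + \<bar>vphi\<bar> / 2 \<le> \<bar>vphi\<bar> / 2 * \<bar>of_int k\<bar>" .
    with abs_walk_exponent_approx[of vphi k] show ?case
      unfolding abs_le_iff by linarith
  qed
  then have "\<forall>\<^sub>F k in cofinite. \<bar>ln (cmod (walk_mat vphi phi k $ 1 $ 1 - walk_mat vphi phi k $ 1 $ 2))
                                  - \<bar>vphi\<bar> / 2 * \<bar>of_int k\<bar>\<bar> \<le> K + \<bar>vphi\<bar> / 2"
  proof eventually_elim
    case (elim k)
    let ?e = "ln (cmod (walk_mat vphi phi k $ 1 $ 1 - walk_mat vphi phi k $ 1 $ 2))"
    let ?s = "\<bar>walk_exponent vphi k\<bar>"
    have "\<bar>?e - \<bar>vphi\<bar> / 2 * \<bar>of_int k\<bar>\<bar> \<le> \<bar>?e - ?s\<bar> + \<bar>?s - \<bar>vphi\<bar> / 2 * \<bar>of_int k\<bar>\<bar>"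
      using dist_triangle[of ?e _ ?s] by (simp add: dist_real_def)
    also have "\<dots> \<le> K + \<bar>vphi\<bar> / 2"
    proof (rule add_mono)
      show "\<bar>?e - ?s\<bar> \<le> K"
        using elim unfolding norm_walk_mat_entry_diff by (rule KT)
    qed (rule abs_walk_exponent_approx)
    finally show ?case .
  qed
  then show ?thesis
    by (rule bounded_if_eventually_bounded_cofinite) (rule that)
qed

section \<open>Averages over choice sequences and the walk\<close>

definition bits_mean :: "nat \<Rightarrow> (bool list \<Rightarrow> real) \<Rightarrow> real" where
  "bits_mean n f = (\<Sum>xs\<in>{xs. length xs = n}. f xs) / 2 ^ n"

lemma bits_mean_0 [simp]: "bits_mean 0 f = f []"
  by (simp add: bits_mean_def)

lemma bits_mean_Suc:
  "bits_mean (Suc n) f = (bits_mean n (\<lambda>xs. f (True # xs)) + bits_mean n (\<lambda>xs. f (False # xs))) / 2"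
proof -
  let ?L = "{xs :: bool list. length xs = n}"
  have "finite ?L"
    using finite_lists_length_eq[of "UNIV :: bool set" n] by simp
  have "{xs. length xs = Suc n} = Cons True ` ?L \<union> Cons False ` ?L"
    by (auto simp: length_Suc_conv)
  then have "(\<Sum>xs | length xs = Suc n. f xs) = sum f (Cons True ` ?L) + sum f (Cons False ` ?L)"
    using \<open>finite ?L\<close> by (simp, intro sum.union_disjoint) auto
  also have "\<dots> = (\<Sum>xs\<in>?L. f (True # xs)) + (\<Sum>xs\<in>?L. f (False # xs))"
    by (simp add: sum.reindex)
  finally show ?thesis
    by (simp add: bits_mean_def field_simps)
qed

lemma bits_mean_add: "bits_mean n (\<lambda>xs. f xs + g xs) = bits_mean n f + bits_mean n g"
  by (simp add: bits_mean_def sum.distrib add_divide_distrib)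

lemma bits_mean_diff: "bits_mean n (\<lambda>xs. f xs - g xs) = bits_mean n f - bits_mean n g"
  by (simp add: bits_mean_def sum_subtractf diff_divide_distrib)

lemma bits_mean_cmult: "bits_mean n (\<lambda>xs. c * f xs) = c * bits_mean n f"
  by (simp add: bits_mean_def sum_distrib_left)

lemma abs_bits_mean_le:
  assumes "\<And>xs. \<bar>f xs\<bar> \<le> K"
  shows "\<bar>bits_mean n f\<bar> \<le> K"
proof -
  have "\<bar>\<Sum>xs | length xs = n. f xs\<bar> \<le> (\<Sum>xs | length xs = n. \<bar>f xs\<bar>)"
    by (rule sum_abs)
  also have "\<dots> \<le> (\<Sum>xs :: bool list | length xs = n. K)"
    by (intro sum_mono assms)
  also have "\<dots> = 2 ^ n * K"
    using card_lists_length_eq[of "UNIV :: bool set" n] by simp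
  finally show ?thesis
    by (simp add: bits_mean_def abs_divide field_simps)
qed

definition walk_prob :: "nat \<Rightarrow> int \<Rightarrow> real" where
  "walk_prob n k = bits_mean n (\<lambda>xs. of_bool (walk xs = k))"

lemma walk_prob_0: "walk_prob 0 k = of_bool (k = 0)"
  by (auto simp: walk_prob_def)

lemma walk_prob_Suc: "walk_prob (Suc n) k = (walk_prob n (1 - k) + walk_prob n (-1 - k)) / 2"
proof -
  have "(1 - w = k) = (w = 1 - k)" "(-1 - w = k) = (w = -1 - k)" for w :: int
    by auto
  then show ?thesis
    unfolding walk_prob_def bits_mean_Suc by simp
qed

lemma walk_prob_uminus: "walk_prob n (- k) = walk_prob n k"
proof (induction n arbitrary: k)
  case 0
  show ?case by (simp add: walk_prob_0)
next
  case (Suc n)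
  show ?case
    using Suc.IH[of "k - 1"] Suc.IH[of "k + 1"] by (simp add: walk_prob_Suc add.commute)
qed

lemma walk_prob_odd: "odd (int n + k) \<Longrightarrow> walk_prob n k = 0"
proof (induction n arbitrary: k)
  case 0
  then show ?case by (auto simp: walk_prob_0)
next
  case (Suc n)
  then have "odd (int n + (1 - k))" "odd (int n + (-1 - k))" by presburger+
  with Suc.IH show ?case by (simp add: walk_prob_Suc)
qed

lemma walk_prob_binomial: "walk_prob n (2 * int j - int n) = real (n choose j) / 2 ^ n"
proof (induction n arbitrary: j)
  case 0
  show ?case by (simp add: walk_prob_0)
next
  case (Suc n)
  have lower: "walk_prob n (int n - 2 * int j) = real (n choose j) / 2 ^ n"
    using walk_prob_uminus[of n "2 * int j - int n"] Suc.IH[of j] by simp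
  have upper: "walk_prob n (int n + 2 - 2 * int j)
               = (if j = 0 then 0 else real (n choose (j - 1)) / 2 ^ n)"
  proof (cases j)
    case 0
    then have "int n + 2 - 2 * int j = 2 * int (Suc n) - int n" by simp
    with 0 show ?thesis using Suc.IH[of "Suc n"] by simp
  next
    case (Suc i)
    then have "int n + 2 - 2 * int j = - (2 * int i - int n)" by simp
    with Suc show ?thesis using Suc.IH[of i] by (simp only: walk_prob_uminus) simp
  qed
  have "1 - (2 * int j - int (Suc n)) = int n + 2 - 2 * int j"
       "-1 - (2 * int j - int (Suc n)) = int n - 2 * int j" by simp_all
  then have "walk_prob (Suc n) (2 * int j - int (Suc n))
             = (walk_prob n (int n + 2 - 2 * int j) + walk_prob n (int n - 2 * int j)) / 2"
    by (simp only: walk_prob_Suc)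
  also have "\<dots> = real (Suc n choose j) / 2 ^ Suc n"
    unfolding lower upper by (cases j) (simp_all add: field_simps)
  finally show ?case .
qed

definition mean_abs_walk :: "nat \<Rightarrow> real" where
  "mean_abs_walk n = bits_mean n (\<lambda>xs. \<bar>of_int (walk xs)\<bar>)"

lemma mean_abs_walk_Suc: "mean_abs_walk (Suc n) = mean_abs_walk n + walk_prob n 0"
proof -
  have "\<bar>of_int (1 - w)\<bar> + \<bar>of_int (-1 - w)\<bar> = 2 * \<bar>of_int w\<bar> + 2 * (of_bool (w = 0) :: real)"
    for w :: int
    by (cases "w = 0"; cases "w > 0") auto
  then show ?thesis
    by (simp add: mean_abs_walk_def walk_prob_def bits_mean_Suc flip: bits_mean_add)
      (simp add: bits_mean_add bits_mean_cmult)
qed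

section \<open>Central binomial probabilities\<close>

definition central_prob :: "nat \<Rightarrow> real" where
  "central_prob j = real ((2 * j) choose j) / 4 ^ j"

lemma central_prob_Suc: "central_prob (Suc j) = central_prob j * (2 * real j + 1) / (2 * real j + 2)"
proof -
  define a b :: real where "a = fact (2 * j)" and "b = fact j"
  have "a > 0" "b > 0"
    by (simp_all add: a_def b_def)
  have "real ((2 * Suc j) choose Suc j) = fact (Suc (Suc (2 * j))) / (fact (Suc j) * fact (Suc j))"
    by (subst binomial_fact) simp_all
  also have "\<dots> = (2 * j + 2) * (2 * j + 1) * a / ((j + 1) * b * ((j + 1) * b))"
    by (simp add: a_def b_def algebra_simps)
  finally have Suc_j:
    "central_prob (Suc j) = (2 * j + 2) * (2 * j + 1) * a / ((j + 1) * b * ((j + 1) * b)) / (4 * 4 ^ j)"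
    by (simp add: central_prob_def)
  have "real ((2 * j) choose j) = a / (b * b)"
    by (subst binomial_fact) (simp_all add: a_def b_def)
  then have j: "central_prob j = a / (b * b) / 4 ^ j"
    by (simp add: central_prob_def)
  have "real j + 1 > 0"
    by simp
  then show ?thesis
    unfolding Suc_j j using \<open>a > 0\<close> \<open>b > 0\<close>
    by (simp add: divide_simps) (simp add: algebra_simps)
qed

lemma central_prob_wallis:
  "(2 * real j + 1) * central_prob j ^ 2 * (\<Prod>k=1..j. 4 * real k ^ 2 / (4 * real k ^ 2 - 1)) = 1"
proof (induction j)
  case 0
  show ?case by (simp add: central_prob_def)
next
  case (Suc j)
  define W where "W = (\<Prod>k=1..j. 4 * real k ^ 2 / (4 * real k ^ 2 - 1))"
  have "4 * real (Suc j) ^ 2 - 1 = (2 * real j + 1) * (2 * real j + 3)"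
    by (simp add: algebra_simps power2_eq_square)
  then have prod_Suc: "(\<Prod>k=1..Suc j. 4 * real k ^ 2 / (4 * real k ^ 2 - 1))
             = W * (4 * (real j + 1) ^ 2 / ((2 * real j + 1) * (2 * real j + 3)))"
    by (simp add: W_def prod.cl_ivl_Suc)
  have step: "(2 * real (Suc j) + 1) * (c * (2 * real j + 1) / (2 * real j + 2)) ^ 2
                   * (w * (4 * (real j + 1) ^ 2 / ((2 * real j + 1) * (2 * real j + 3))))
                 = (2 * real j + 1) * c ^ 2 * w" for c w :: real
  proof -
    define y where "y = 2 * real j + 1"
    have "y \<noteq> 0" "y + 1 \<noteq> 0" "y + 2 \<noteq> 0"
      by (simp_all add: y_def)
    then have main: "(y + 2) * (c * y / (y + 1)) ^ 2 * (w * ((y + 1) ^ 2 / (y * (y + 2)))) = y * c ^ 2 * w"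
      by (simp add: divide_simps) (simp add: algebra_simps power2_eq_square)
    have y_eqs: "2 * real j + 1 = y" "2 * real j + 2 = y + 1" "2 * real j + 3 = y + 2"
        "2 * real (Suc j) + 1 = y + 2" "4 * (real j + 1) ^ 2 = (y + 1) ^ 2"
      unfolding y_def by (simp_all add: algebra_simps power2_eq_square)
    show ?thesis
      unfolding y_eqs by (rule main)
  qed
  show ?case
    unfolding prod_Suc central_prob_Suc step W_def by (rule Suc.IH)
qed

lemma tendsto_central_prob_sq: "(\<lambda>j. (2 * real j + 1) * central_prob j ^ 2) \<longlonglongrightarrow> 2 / pi"
proof -
  let ?W = "\<lambda>j. \<Prod>k=1..j. 4 * real k ^ 2 / (4 * real k ^ 2 - 1)"
  have "(2 * real j + 1) * central_prob j ^ 2 = inverse (?W j)" for j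
  proof -
    have "?W j * ((2 * real j + 1) * central_prob j ^ 2) = 1"
      using central_prob_wallis[of j] by (simp add: ac_simps)
    then show ?thesis
      by (rule inverse_unique[symmetric])
  qed
  moreover have "(\<lambda>j. inverse (?W j)) \<longlonglongrightarrow> inverse (pi / 2)"
    by (rule tendsto_inverse[OF wallis]) simp
  ultimately show ?thesis
    by simp
qed

lemma filterlim_div2_sequentially: "filterlim (\<lambda>n::nat. n div 2) sequentially sequentially"
  unfolding filterlim_at_top
proof
  fix m :: nat
  show "\<forall>\<^sub>F n in sequentially. m \<le> n div 2"
    by (rule eventually_sequentiallyI[of "2 * m"]) simp
qed

lemma tendsto_central_prob_half_sq: "(\<lambda>n. real n * central_prob (n div 2) ^ 2) \<longlonglongrightarrow> 2 / pi"
proof -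
  have lower: "real n \<le> 2 * real (n div 2) + 1" and upper: "2 * real (n div 2) + 1 \<le> real (Suc n)"
    for n :: nat
  proof -
    have "real n \<le> real (2 * (n div 2) + 1)" "real (2 * (n div 2) + 1) \<le> real (Suc n)"
      unfolding of_nat_le_iff by presburger+
    then show "real n \<le> 2 * real (n div 2) + 1" "2 * real (n div 2) + 1 \<le> real (Suc n)"
      by simp_all
  qed
  have ratio: "(\<lambda>n. real n / (2 * real (n div 2) + 1)) \<longlonglongrightarrow> 1"
  proof (rule tendsto_sandwich[OF _ _ LIMSEQ_n_over_Suc_n tendsto_const])
    show "\<forall>\<^sub>F n in sequentially. real n / real (Suc n) \<le> real n / (2 * real (n div 2) + 1)"
      using upper by (intro always_eventually allI divide_left_mono) (simp_all add: add_pos_nonneg)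
    show "\<forall>\<^sub>F n in sequentially. real n / (2 * real (n div 2) + 1) \<le> 1"
      using lower by (intro always_eventually allI) (simp add: add_pos_nonneg)
  qed
  have "(\<lambda>n. real n / (2 * real (n div 2) + 1) * ((2 * real (n div 2) + 1) * central_prob (n div 2) ^ 2))
        \<longlonglongrightarrow> 1 * (2 / pi)"
    by (intro tendsto_mult ratio filterlim_compose[OF tendsto_central_prob_sq filterlim_div2_sequentially])
  moreover have "real n / (2 * real (n div 2) + 1) * ((2 * real (n div 2) + 1) * central_prob (n div 2) ^ 2)
                 = real n * central_prob (n div 2) ^ 2" for n
    by (simp add: field_simps add_pos_nonneg)
  ultimately show ?thesis
    by simp
qed

lemma walk_prob_central: "walk_prob (2 * j) 0 = central_prob j"
  using walk_prob_binomial[of "2 * j" j] by (simp add: central_prob_def power_mult)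

lemma mean_abs_walk_double:
  "mean_abs_walk (2 * j) = 2 * real j * central_prob j
   \<and> mean_abs_walk (Suc (2 * j)) = (2 * real j + 1) * central_prob j"
proof (induction j)
  case 0
  show ?case by (simp add: mean_abs_walk_Suc walk_prob_0 central_prob_def mean_abs_walk_def[of 0])
next
  case (Suc j)
  have "walk_prob (Suc (2 * j)) 0 = 0"
    by (rule walk_prob_odd) simp
  then have "mean_abs_walk (2 * Suc j) = mean_abs_walk (Suc (2 * j))"
    using mean_abs_walk_Suc[of "Suc (2 * j)"] by simp
  also have "\<dots> = (2 * real j + 1) * central_prob j"
    using Suc.IH ..
  also have "\<dots> = 2 * real (Suc j) * central_prob (Suc j)"
  proof -
    have "2 * real j + 2 > 0"
      by simp
    then show ?thesis
      by (simp add: central_prob_Suc field_simps)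
  qed
  finally have even: "mean_abs_walk (2 * Suc j) = 2 * real (Suc j) * central_prob (Suc j)" .
  have "mean_abs_walk (Suc (2 * Suc j)) = mean_abs_walk (2 * Suc j) + central_prob (Suc j)"
    using mean_abs_walk_Suc[of "2 * Suc j"] walk_prob_central[of "Suc j"] by simp
  also have "\<dots> = (2 * real (Suc j) + 1) * central_prob (Suc j)"
    unfolding even by (simp add: algebra_simps)
  finally show ?case
    using even by blast
qed

lemma mean_abs_walk_eq: "mean_abs_walk n = real n * central_prob (n div 2)"
proof (cases "even n")
  case True
  then obtain j where "n = 2 * j" ..
  then show ?thesis
    using mean_abs_walk_double[of j] by simp
next
  case False
  then obtain j where "n = Suc (2 * j)"
    by (metis oddE Suc_eq_plus1)
  then show ?thesis
    using mean_abs_walk_double[of j] by simp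
qed

lemma mean_abs_walk_asymp_equiv: "mean_abs_walk \<sim>[at_top] (\<lambda>n. sqrt (2 / pi) * sqrt (real n))"
proof (rule asymp_equivI'_const)
  have "mean_abs_walk n / sqrt (real n) = sqrt (real n * central_prob (n div 2) ^ 2)" for n
  proof -
    have "mean_abs_walk n / sqrt (real n) = real n / sqrt (real n) * central_prob (n div 2)"
      by (simp add: mean_abs_walk_eq)
    also have "\<dots> = sqrt (real n) * central_prob (n div 2)"
      by (simp add: real_div_sqrt)
    also have "\<dots> = sqrt (real n * central_prob (n div 2) ^ 2)"
      by (simp add: real_sqrt_mult central_prob_def)
    finally show ?thesis .
  qed
  then show "(\<lambda>n. mean_abs_walk n / sqrt (real n)) \<longlonglongrightarrow> sqrt (2 / pi)"
    by (simp add: tendsto_real_sqrt tendsto_central_prob_half_sq)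
qed simp

section \<open>The expected logarithm\<close>

lemma ElogAB_minus_mean_abs_walk_bounded:
  assumes "vphi \<noteq> 0" and "(sin phi)\<^sup>2 \<noteq> 1"
  obtains K where "\<And>n. \<bar>ElogAB vphi phi n - \<bar>vphi\<bar> / 2 * mean_abs_walk n\<bar> \<le> K"
proof -
  obtain K where K: "\<And>k. \<bar>ln (cmod (walk_mat vphi phi k $ 1 $ 1 - walk_mat vphi phi k $ 1 $ 2))
                          - \<bar>vphi\<bar> / 2 * \<bar>of_int k\<bar>\<bar> \<le> K"
    using ln_norm_walk_mat_entry_diff_bounded[OF assms] by blast
  have "ElogAB vphi phi n - \<bar>vphi\<bar> / 2 * mean_abs_walk n
        = bits_mean n (\<lambda>xs. ln (cmod (walk_mat vphi phi (walk xs) $ 1 $ 1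
                                         - walk_mat vphi phi (walk xs) $ 1 $ 2))
                            - \<bar>vphi\<bar> / 2 * \<bar>of_int (walk xs)\<bar>)" for n
    unfolding ElogAB_def mean_abs_walk_def bits_mean_def[symmetric]
    by (simp only: bits_mean_diff bits_mean_cmult norm_prodM_entry_diff)
  then show ?thesis
    by (intro that[of K]) (simp only: abs_bits_mean_le K)
qed

lemma ElogAB_asymp_equiv:
  assumes "vphi \<noteq> 0" and "(sin phi)\<^sup>2 \<noteq> 1"
  shows "ElogAB vphi phi \<sim>[at_top] (\<lambda>n. \<bar>vphi\<bar> / sqrt (2 * pi) * sqrt (real n))"
proof -
  define err where "err n = ElogAB vphi phi n - \<bar>vphi\<bar> / 2 * mean_abs_walk n" for n
  obtain K where "\<And>n. \<bar>err n\<bar> \<le> K"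
    using ElogAB_minus_mean_abs_walk_bounded[OF assms] unfolding err_def by blast
  then have "err \<in> O(\<lambda>_. 1)"
    by (intro bigoI[of _ K]) simp
  also have "(\<lambda>_. 1) \<in> o(\<lambda>n. \<bar>vphi\<bar> / sqrt (2 * pi) * sqrt (real n))"
    using assms(1) by simp real_asymp
  finally have err_small: "err \<in> o(\<lambda>n. \<bar>vphi\<bar> / sqrt (2 * pi) * sqrt (real n))" .
  have "sqrt (2 / pi) = 2 / sqrt (2 * pi)"
    by (simp add: real_sqrt_divide real_sqrt_mult field_simps)
  then have "(\<lambda>n. \<bar>vphi\<bar> / 2 * mean_abs_walk n)
             \<sim>[at_top] (\<lambda>n. \<bar>vphi\<bar> / sqrt (2 * pi) * sqrt (real n))"
    using asymp_equiv_mult[OF asymp_equiv_refl[of "\<lambda>_. \<bar>vphi\<bar> / 2"] mean_abs_walk_asymp_equiv]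
    by simp
  then have "(\<lambda>n. \<bar>vphi\<bar> / 2 * mean_abs_walk n + err n)
             \<sim>[at_top] (\<lambda>n. \<bar>vphi\<bar> / sqrt (2 * pi) * sqrt (real n))"
    by (subst asymp_equiv_add_right[OF err_small])
  then show ?thesis
    by (simp add: err_def)
qed

theorem mainTheorem7:
  fixes vphi phi :: real
  assumes "vphi \<noteq> 0" and "(sin phi)\<^sup>2 \<noteq> 1"
  shows "\<exists>g::real. g > 0 \<and> (\<lambda>n. ElogAB vphi phi n) \<sim>[at_top] (\<lambda>n. g * sqrt (real n))"
  using ElogAB_asymp_equiv[OF assms] assms(1)
  by (intro exI[of _ "\<bar>vphi\<bar> / sqrt (2 * pi)"] conjI) simp_all

end
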